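(* Let $M,N$ be sharp, integral monoids, $\Gamma$ an $M$-metrised graph, $f:M\to N$ a monoid homomorphism with edge contraction $\Gamma'$ of $\Gamma$ along $f$, and $D\in\operatorname{Div}(\Gamma)$. Then $r(f_*(D))\ge r(D)$ (rank in $\Gamma'$ versus rank in $\Gamma$).
   Context: Monoids are commutative, sharp (only unit $0$), integral (cancellative), with groupification; $\langle m\rangle=\{km:k\in\mathbb Z\}$ and for $x=km$, $m\ne0$, $x/m:=k$. A graph is $(X,r,i)$, $X$ finite, $r$ idempotent, $i$ an involution, $i(x)=x\iff r(x)=x$; vertices $V$ = fixed points, half-edges $H=X\setminus V$, edges $\{e,i(e)\}$ joining $r(e),r(i(e))$, $H_v=\{e\in H:r(e)=v\}$; graphs are connected. An $M$-metrised graph adds $l:X\to M$ with $l(i(x))=l(x)$, $l(x)=0\iff x\in V$. Divisors: free abelian group on $V$, pointwise order; $\operatorname{Div}^k_+$ = effective divisors of degree $k$. $\operatorname{PL}(\Gamma)=\{g:V\to M^{gp}: g(r(e))-g(r(i(e)))\in\langle l(e)\rangle\ \forall e\in H\}$; $\Delta(g)=\sum_{v}\big(\sum_{e\in H_v}\frac{g(v)-g(r(i(e)))}{l(e)}\big)[v]$; $D\sim D'$ iff $D-D'\in\Delta(\operatorname{PL}(\Gamma))$; $|D|=\{E\ge0:E\sim D\}$; $r(D)=\max\{k\in\mathbb Z:|D-F|\ne\emptyset\ \forall F\in\operatorname{Div}^k_+(\Gamma)\}$. The edge contraction of $\Gamma$ along $f$ is the $N$-metrised graph $\Gamma'$ obtained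 as the quotient of $X$ by the equivalence relation generated by $e\sim r(e)\sim i(e)\sim r(i(e))$ for every $e\in H$ with $f(l(e))=0$, with induced $r,i$ and length $f\circ l$; $\varphi$ is the quotient map and $f_*(D)=\sum_{v}D(v)[\varphi(v)]$. *)

theory Defs
  imports Main
begin

text \<open>An integral (cancellative) commutative monoid is represented as a submonoid M of an
abelian group; its groupification is the subgroup {a - b | a, b in M}.\<close>

definition zsmul :: "int \<Rightarrow> 'a::ab_group_add \<Rightarrow> 'a" where
  "zsmul k m = (if 0 \<le> k then (((+) m) ^^ nat k) 0 else - ((((+) m) ^^ nat (- k)) 0))"

definition zspan :: "'a::ab_group_add \<Rightarrow> 'a set" where
  "zspan m = range (\<lambda>k. zsmul k m)"

definition zdiv :: "'a::ab_group_add \<Rightarrow> 'a \<Rightarrow> int" where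
  "zdiv x m = (THE k. x = zsmul k m)"

definition sharp_monoid :: "'a::ab_group_add set \<Rightarrow> bool" where
  "sharp_monoid M \<longleftrightarrow> 0 \<in> M \<and> (\<forall>a\<in>M. \<forall>b\<in>M. a + b \<in> M)
     \<and> (\<forall>a\<in>M. \<forall>b\<in>M. a + b = 0 \<longrightarrow> a = 0)"

definition gp :: "'a::ab_group_add set \<Rightarrow> 'a set" where
  "gp M = {a - b | a b. a \<in> M \<and> b \<in> M}"

definition monoid_hom :: "'a::ab_group_add set \<Rightarrow> 'b::ab_group_add set \<Rightarrow> ('a \<Rightarrow> 'b) \<Rightarrow> bool" where
  "monoid_hom M N f \<longleftrightarrow> (\<forall>a\<in>M. f a \<in> N) \<and> f 0 = 0 \<and> (\<forall>a\<in>M. \<forall>b\<in>M. f (a + b) = f a + f b)"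

definition verts :: "'x set \<Rightarrow> ('x \<Rightarrow> 'x) \<Rightarrow> 'x set" where
  "verts X r = {x \<in> X. r x = x}"

definition halfedges :: "'x set \<Rightarrow> ('x \<Rightarrow> 'x) \<Rightarrow> 'x set" where
  "halfedges X r = X - verts X r"

definition adj :: "'x set \<Rightarrow> ('x \<Rightarrow> 'x) \<Rightarrow> ('x \<Rightarrow> 'x) \<Rightarrow> ('x \<times> 'x) set" where
  "adj X r i = {(r e, r (i e)) | e. e \<in> halfedges X r}"

definition is_graph :: "'x set \<Rightarrow> ('x \<Rightarrow> 'x) \<Rightarrow> ('x \<Rightarrow> 'x) \<Rightarrow> bool" where
  "is_graph X r i \<longleftrightarrow> finite X \<and>
     (\<forall>x\<in>X. r x \<in> X \<and> i x \<in> X \<and> r (r x) = r x \<and> i (i x) = x \<and> (i x = x \<longleftrightarrow> r x = x)) \<and>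
     verts X r \<noteq> {} \<and> (\<forall>u\<in>verts X r. \<forall>v\<in>verts X r. (u, v) \<in> (adj X r i)\<^sup>*)"

definition metrised_graph :: "'m::ab_group_add set \<Rightarrow> 'x set \<Rightarrow> ('x \<Rightarrow> 'x) \<Rightarrow> ('x \<Rightarrow> 'x) \<Rightarrow> ('x \<Rightarrow> 'm) \<Rightarrow> bool" where
  "metrised_graph M X r i l \<longleftrightarrow> is_graph X r i \<and>
     (\<forall>x\<in>X. l x \<in> M \<and> l (i x) = l x \<and> (l x = 0 \<longleftrightarrow> x \<in> verts X r))"

definition divisors :: "'x set \<Rightarrow> ('x \<Rightarrow> 'x) \<Rightarrow> ('x \<Rightarrow> int) set" where
  "divisors X r = {D. \<forall>x. x \<notin> verts X r \<longrightarrow> D x = 0}"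

definition deg :: "'x set \<Rightarrow> ('x \<Rightarrow> 'x) \<Rightarrow> ('x \<Rightarrow> int) \<Rightarrow> int" where
  "deg X r D = sum D (verts X r)"

definition PL :: "'m::ab_group_add set \<Rightarrow> 'x set \<Rightarrow> ('x \<Rightarrow> 'x) \<Rightarrow> ('x \<Rightarrow> 'x) \<Rightarrow> ('x \<Rightarrow> 'm)
    \<Rightarrow> ('x \<Rightarrow> 'm) set" where
  "PL M X r i l = {g. (\<forall>v\<in>verts X r. g v \<in> gp M) \<and>
     (\<forall>e\<in>halfedges X r. g (r e) - g (r (i e)) \<in> zspan (l e))}"

definition laplacian :: "'x set \<Rightarrow> ('x \<Rightarrow> 'x) \<Rightarrow> ('x \<Rightarrow> 'x) \<Rightarrow> ('x \<Rightarrow> 'm::ab_group_add)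
    \<Rightarrow> ('x \<Rightarrow> 'm) \<Rightarrow> ('x \<Rightarrow> int)" where
  "laplacian X r i l g = (\<lambda>v. if v \<in> verts X r then
      (\<Sum>e\<in>{e \<in> halfedges X r. r e = v}. zdiv (g v - g (r (i e))) (l e)) else 0)"

definition lin_equiv :: "'m::ab_group_add set \<Rightarrow> 'x set \<Rightarrow> ('x \<Rightarrow> 'x) \<Rightarrow> ('x \<Rightarrow> 'x) \<Rightarrow> ('x \<Rightarrow> 'm)
    \<Rightarrow> ('x \<Rightarrow> int) \<Rightarrow> ('x \<Rightarrow> int) \<Rightarrow> bool" where
  "lin_equiv M X r i l D D' \<longleftrightarrow> (\<exists>g\<in>PL M X r i l. (\<lambda>v. D v - D' v) = laplacian X r i l g)"

definition lin_system :: "'m::ab_group_add set \<Rightarrow> 'x set \<Rightarrow> ('x \<Rightarrow> 'x) \<Rightarrow> ('x \<Rightarrow> 'x) \<Rightarrow> ('x \<Rightarrow> 'm)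
    \<Rightarrow> ('x \<Rightarrow> int) \<Rightarrow> ('x \<Rightarrow> int) set" where
  "lin_system M X r i l D = {E \<in> divisors X r. (\<forall>v. 0 \<le> E v) \<and> lin_equiv M X r i l E D}"

definition rank :: "'m::ab_group_add set \<Rightarrow> 'x set \<Rightarrow> ('x \<Rightarrow> 'x) \<Rightarrow> ('x \<Rightarrow> 'x) \<Rightarrow> ('x \<Rightarrow> 'm)
    \<Rightarrow> ('x \<Rightarrow> int) \<Rightarrow> int" where
  "rank M X r i l D = (GREATEST k::int. \<forall>F\<in>divisors X r. (\<forall>v. 0 \<le> F v) \<and> deg X r F = k \<longrightarrow>
       lin_system M X r i l (\<lambda>v. D v - F v) \<noteq> {})"

definition contr_gen :: "'x set \<Rightarrow> ('x \<Rightarrow> 'x) \<Rightarrow> ('x \<Rightarrow> 'x) \<Rightarrow> ('x \<Rightarrow> 'm) \<Rightarrow> ('m \<Rightarrow> 'n::zero)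
    \<Rightarrow> ('x \<times> 'x) set" where
  "contr_gen X r i l f = {(e, y) | e y. e \<in> halfedges X r \<and> f (l e) = 0 \<and> y \<in> {r e, i e, r (i e)}}"

definition contr_rel :: "'x set \<Rightarrow> ('x \<Rightarrow> 'x) \<Rightarrow> ('x \<Rightarrow> 'x) \<Rightarrow> ('x \<Rightarrow> 'm) \<Rightarrow> ('m \<Rightarrow> 'n::zero)
    \<Rightarrow> ('x \<times> 'x) set" where
  "contr_rel X r i l f = (contr_gen X r i l f \<union> (contr_gen X r i l f)\<inverse>)\<^sup>* \<inter> (X \<times> X)"

definition contr_X :: "'x set \<Rightarrow> ('x \<Rightarrow> 'x) \<Rightarrow> ('x \<Rightarrow> 'x) \<Rightarrow> ('x \<Rightarrow> 'm) \<Rightarrow> ('m \<Rightarrow> 'n::zero)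
    \<Rightarrow> 'x set set" where
  "contr_X X r i l f = X // contr_rel X r i l f"

definition contr_r :: "'x set \<Rightarrow> ('x \<Rightarrow> 'x) \<Rightarrow> ('x \<Rightarrow> 'x) \<Rightarrow> ('x \<Rightarrow> 'm) \<Rightarrow> ('m \<Rightarrow> 'n::zero)
    \<Rightarrow> 'x set \<Rightarrow> 'x set" where
  "contr_r X r i l f C = contr_rel X r i l f `` (r ` C)"

definition contr_i :: "'x set \<Rightarrow> ('x \<Rightarrow> 'x) \<Rightarrow> ('x \<Rightarrow> 'x) \<Rightarrow> ('x \<Rightarrow> 'm) \<Rightarrow> ('m \<Rightarrow> 'n::zero)
    \<Rightarrow> 'x set \<Rightarrow> 'x set" where
  "contr_i X r i l f C = contr_rel X r i l f `` (i ` C)"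

definition contr_l :: "('x \<Rightarrow> 'm) \<Rightarrow> ('m \<Rightarrow> 'n) \<Rightarrow> 'x set \<Rightarrow> 'n" where
  "contr_l l f C = f (l (SOME x. x \<in> C))"

definition contr_map :: "'x set \<Rightarrow> ('x \<Rightarrow> 'x) \<Rightarrow> ('x \<Rightarrow> 'x) \<Rightarrow> ('x \<Rightarrow> 'm) \<Rightarrow> ('m \<Rightarrow> 'n::zero)
    \<Rightarrow> 'x \<Rightarrow> 'x set" where
  "contr_map X r i l f x = contr_rel X r i l f `` {x}"

definition push_div :: "'x set \<Rightarrow> ('x \<Rightarrow> 'x) \<Rightarrow> ('x \<Rightarrow> 'x) \<Rightarrow> ('x \<Rightarrow> 'm) \<Rightarrow> ('m \<Rightarrow> 'n::zero)
    \<Rightarrow> ('x \<Rightarrow> int) \<Rightarrow> ('x set \<Rightarrow> int)" where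
  "push_div X r i l f D = (\<lambda>C. if C \<in> verts (contr_X X r i l f) (contr_r X r i l f)
      then (\<Sum>v\<in>{v \<in> verts X r. contr_map X r i l f v = C}. D v) else 0)"

end

theory Submission
  imports Defs "HOL-Library.Disjoint_Sets"
begin

text \<open>A monoid homomorphism f extends additively to the groupifications, and a piecewise linear
  function g on \<Gamma> induces one on \<Gamma>': since g changes by a multiple of l(e) along e, its image
  under f is constant on every contracted edge and hence on every fibre of \<phi>. Slopes along
  surviving edges are unchanged, while along contracted edges the two half-edges cancel, so
  f_* commutes with the Laplacian. Since f_* also preserves degrees and every effective divisor
  on \<Gamma>' lifts to an effective divisor on \<Gamma>, each degree k witnessing r(D) \<ge> k also witnesses
  r(f_* D) \<ge> k.\<close>

lemma zsmul_0 [simp]: "zsmul 0 m = 0"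
  by (simp add: zsmul_def)

lemma zsmul_succ: "zsmul (k + 1) m = zsmul k m + m"
proof (cases "k \<ge> 0")
  case True
  then have "nat (k + 1) = Suc (nat k)" by simp
  with True show ?thesis by (simp add: zsmul_def add.commute)
next
  case False
  show ?thesis
  proof (cases "k = -1")
    case True then show ?thesis by (simp add: zsmul_def)
  next
    case _: False
    with \<open>\<not> k \<ge> 0\<close> have "nat (- k) = Suc (nat (- (k + 1)))" "\<not> 0 \<le> k + 1" by auto
    with \<open>\<not> k \<ge> 0\<close> show ?thesis by (simp add: zsmul_def algebra_simps)
  qed
qed

lemma zsmul_pred: "zsmul (k - 1) m = zsmul k m - m"
  using zsmul_succ[of "k - 1" m] by (simp add: algebra_simps)

lemma zsmul_add: "zsmul (k + j) m = zsmul k m + zsmul j m"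
proof (induction j rule: int_induct[where k = 0])
  case base then show ?case by simp
next
  case (step1 j) then show ?case
    using zsmul_succ[of "k + j" m] zsmul_succ[of j m] by (simp add: algebra_simps)
next
  case (step2 j)
  have "zsmul (k + (j - 1)) m = zsmul (k + j) m - m"
    using zsmul_pred[of "k + j" m] by (simp add: algebra_simps)
  with step2 show ?case by (simp add: zsmul_pred algebra_simps)
qed

lemma zsmul_uminus: "zsmul (- k) m = - zsmul k m"
  using zsmul_add[of "- k" k m] by (simp add: eq_neg_iff_add_eq_0)

lemma zsmul_diff: "zsmul (k - j) m = zsmul k m - zsmul j m"
  using zsmul_add[of k "- j" m] zsmul_uminus[of j m] by simp

lemma zsmul_zero_right [simp]: "zsmul k (0 :: 'a::ab_group_add) = 0"
proof -
  have "(((+) (0 :: 'a)) ^^ n) 0 = 0" for n by (induction n) auto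
  then show ?thesis by (simp add: zsmul_def)
qed

section \<open>Submonoids of abelian groups and their groupifications\<close>

definition submonoid :: "'a::ab_group_add set \<Rightarrow> bool" where
  "submonoid M \<longleftrightarrow> 0 \<in> M \<and> (\<forall>a\<in>M. \<forall>b\<in>M. a + b \<in> M)"

lemma sharp_monoid_imp_submonoid: "sharp_monoid M \<Longrightarrow> submonoid M"
  by (simp add: sharp_monoid_def submonoid_def)

lemma submonoid_add: "submonoid M \<Longrightarrow> a \<in> M \<Longrightarrow> b \<in> M \<Longrightarrow> a + b \<in> M"
  by (simp add: submonoid_def)

lemma zsmul_mem:
  assumes "submonoid M" "m \<in> M" "k \<ge> 0"
  shows "zsmul k m \<in> M"
  using assms(3)
proof (induction k rule: int_ge_induct[where k = 0])
  case base then show ?case using assms(1) by (simp add: submonoid_def)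
next
  case (step k) then show ?case using assms by (simp add: zsmul_succ submonoid_add)
qed

lemma gpE:
  assumes "x \<in> gp M"
  obtains a b where "a \<in> M" "b \<in> M" "x = a - b"
  using assms unfolding gp_def by blast

lemma gp_add:
  assumes "submonoid M" "x \<in> gp M" "y \<in> gp M"
  shows "x + y \<in> gp M"
proof -
  obtain a b c d where "a \<in> M" "b \<in> M" "x = a - b" "c \<in> M" "d \<in> M" "y = c - d"
    using assms(2,3) by (metis gpE)
  then have "a + c \<in> M" "b + d \<in> M" "x + y = (a + c) - (b + d)"
    using assms(1) by (simp_all add: submonoid_add algebra_simps)
  then show ?thesis unfolding gp_def by blast
qed

lemma gp_uminus: "x \<in> gp M \<Longrightarrow> - x \<in> gp M"
  by (elim gpE) (auto simp: gp_def)

lemma mem_gp: "submonoid M \<Longrightarrow> a \<in> M \<Longrightarrow> a \<in> gp M"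
  unfolding gp_def submonoid_def by force

lemma zsmul_mem_gp:
  assumes "submonoid M" "m \<in> M"
  shows "zsmul k m \<in> gp M"
proof (cases "k \<ge> 0")
  case True then show ?thesis using assms by (simp add: zsmul_mem mem_gp)
next
  case False
  then have "zsmul (- k) m \<in> gp M" using assms by (simp add: zsmul_mem mem_gp)
  then show ?thesis using gp_uminus by (fastforce simp: zsmul_uminus)
qed

text \<open>Sharpness makes the nonzero elements of M torsion-free, so that quotients x / m are unique.\<close>

lemma zsmul_inj:
  assumes M: "sharp_monoid M" and m: "m \<in> M" "m \<noteq> 0" and eq: "zsmul k m = zsmul j m"
  shows "k = j"
proof (rule ccontr)
  assume "k \<noteq> j"
  moreover have "zsmul (k - j) m = 0" "zsmul (j - k) m = 0"
    using eq by (simp_all add: zsmul_diff)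
  ultimately obtain n where n: "n > 0" "zsmul n m = 0"
    by (metis diff_gt_0_iff_gt linorder_neqE_linordered_idom)
  have "zsmul (n - 1) m \<in> M"
    using zsmul_mem[OF sharp_monoid_imp_submonoid[OF M] m(1)] n(1) by simp
  moreover have "zsmul (n - 1) m + m = 0"
    using zsmul_succ[of "n - 1" m] n(2) by simp
  ultimately have "m = 0"
    using M m(1) unfolding sharp_monoid_def by (metis add.commute)
  with m(2) show False ..
qed

lemma zdiv_zsmul:
  assumes "sharp_monoid M" "m \<in> M" "m \<noteq> 0"
  shows "zdiv (zsmul k m) m = k"
  unfolding zdiv_def by (rule the_equality) (use zsmul_inj[OF assms] in auto)

lemma zdiv_uminus:
  assumes "sharp_monoid M" "m \<in> M" "m \<noteq> 0" "x \<in> zspan m"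
  shows "zdiv (- x) m = - zdiv x m"
proof -
  obtain k where "x = zsmul k m" using assms(4) by (auto simp: zspan_def)
  then show ?thesis using zdiv_zsmul[OF assms(1-3)] zsmul_uminus[of k m] by metis
qed

definition gp_hom :: "'a::ab_group_add set \<Rightarrow> ('a \<Rightarrow> 'b::ab_group_add) \<Rightarrow> 'a \<Rightarrow> 'b" where
  "gp_hom M f x = (let (a, b) = SOME (a, b). a \<in> M \<and> b \<in> M \<and> x = a - b in f a - f b)"

context
  fixes M :: "'a::ab_group_add set" and N :: "'b::ab_group_add set" and f :: "'a \<Rightarrow> 'b"
  assumes M: "submonoid M" and hom: "monoid_hom M N f"
begin

private lemma hom_add: "a \<in> M \<Longrightarrow> b \<in> M \<Longrightarrow> f (a + b) = f a + f b"
  using hom by (simp add: monoid_hom_def)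

lemma gp_hom_diff_eq:
  assumes "a \<in> M" "b \<in> M"
  shows "gp_hom M f (a - b) = f a - f b"
proof -
  define p where "p = (SOME (c, d). c \<in> M \<and> d \<in> M \<and> a - b = c - d)"
  have "case p of (c, d) \<Rightarrow> c \<in> M \<and> d \<in> M \<and> a - b = c - d"
    unfolding p_def by (rule someI[where x = "(a, b)"]) (use assms in auto)
  then obtain c d where cd: "p = (c, d)" "c \<in> M" "d \<in> M" "a - b = c - d"
    by (cases p) auto
  then have "a + d = c + b" by (simp add: algebra_simps diff_eq_eq eq_diff_eq)
  then have "f a + f d = f c + f b" using hom_add assms cd by metis
  then have "f a - f b = f c - f d" by (simp add: algebra_simps diff_eq_eq eq_diff_eq)
  then show ?thesis unfolding gp_hom_def p_def[symmetric] using cd by simp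
qed

lemma gp_hom_mem: "a \<in> M \<Longrightarrow> gp_hom M f a = f a"
  using gp_hom_diff_eq[of a 0] M hom by (simp add: submonoid_def monoid_hom_def)

lemma gp_hom_mem_gp: "x \<in> gp M \<Longrightarrow> gp_hom M f x \<in> gp N"
  using hom by (elim gpE) (auto simp: gp_hom_diff_eq gp_def monoid_hom_def)

lemma gp_hom_add:
  assumes "x \<in> gp M" "y \<in> gp M"
  shows "gp_hom M f (x + y) = gp_hom M f x + gp_hom M f y"
proof -
  obtain a b c d where abcd: "a \<in> M" "b \<in> M" "x = a - b" "c \<in> M" "d \<in> M" "y = c - d"
    using assms by (metis gpE)
  have "x + y = (a + c) - (b + d)" using abcd by (simp add: algebra_simps)
  then have "gp_hom M f (x + y) = f (a + c) - f (b + d)"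
    using abcd(1,2,4,5) M by (simp add: gp_hom_diff_eq submonoid_add)
  also have "\<dots> = (f a - f b) + (f c - f d)"
    using abcd by (simp add: hom_add)
  finally show ?thesis using abcd by (simp add: gp_hom_diff_eq)
qed

lemma gp_hom_diff:
  assumes "x \<in> gp M" "y \<in> gp M"
  shows "gp_hom M f (x - y) = gp_hom M f x - gp_hom M f y"
proof -
  have "x - y \<in> gp M" using gp_add[OF M assms(1) gp_uminus[OF assms(2)]] by simp
  from gp_hom_add[OF this assms(2)] show ?thesis by (simp add: algebra_simps)
qed

lemma gp_hom_zsmul:
  assumes m: "m \<in> M"
  shows "gp_hom M f (zsmul k m) = zsmul k (f m)"
proof (induction k rule: int_induct[where k = 0])
  case base then show ?case
    using gp_hom_mem M hom by (simp add: submonoid_def monoid_hom_def)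
next
  case (step1 k) then show ?case
    using gp_hom_add[OF zsmul_mem_gp[OF M m] mem_gp[OF M m]] by (simp add: zsmul_succ gp_hom_mem m)
next
  case (step2 k) then show ?case
    using gp_hom_diff[OF zsmul_mem_gp[OF M m] mem_gp[OF M m]] by (simp add: zsmul_pred gp_hom_mem m)
qed

end

section \<open>Slopes, Laplacians and rank on a metrised graph\<close>

definition slope :: "('x \<Rightarrow> 'x) \<Rightarrow> ('x \<Rightarrow> 'x) \<Rightarrow> ('x \<Rightarrow> 'm::ab_group_add) \<Rightarrow> ('x \<Rightarrow> 'm) \<Rightarrow> 'x \<Rightarrow> int"
  where "slope r i l g e = zdiv (g (r e) - g (r (i e))) (l e)"

lemma laplacian_eq_sum_slope:
  "v \<in> verts X r \<Longrightarrow> laplacian X r i l g v = (\<Sum>e\<in>{e \<in> halfedges X r. r e = v}. slope r i l g e)"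
  by (auto simp: laplacian_def slope_def intro!: sum.cong)

lemma slope_flip:
  assumes "sharp_monoid M" "l e \<in> M" "l e \<noteq> 0" "l (i e) = l e" "i (i e) = e"
    and "g (r e) - g (r (i e)) \<in> zspan (l e)"
  shows "slope r i l g (i e) = - slope r i l g e"
  using zdiv_uminus[OF assms(1-3,6)] assms(4,5) by (simp add: slope_def)

lemma laplacian_sum_eq_0:
  assumes M: "sharp_monoid M" and g: "g \<in> PL M X r i l" and fin: "finite X"
    and edge: "\<And>e. e \<in> halfedges X r \<Longrightarrow> r e \<in> verts X r \<and> i e \<in> halfedges X r \<and> i e \<noteq> e
       \<and> i (i e) = e \<and> l (i e) = l e \<and> l e \<in> M \<and> l e \<noteq> 0"
  shows "sum (laplacian X r i l g) (verts X r) = 0"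
proof -
  have "sum (laplacian X r i l g) (verts X r)
      = (\<Sum>v\<in>verts X r. \<Sum>e\<in>{e \<in> halfedges X r. r e = v}. slope r i l g e)"
    by (simp add: laplacian_eq_sum_slope)
  also have "\<dots> = (\<Sum>e\<in>halfedges X r. slope r i l g e)"
    using fin edge by (intro sum.group) (auto simp: verts_def halfedges_def)
  also have "\<dots> = 0"
  proof (rule sum_involution_eq_0[where h = i])
    fix e assume e: "e \<in> halfedges X r"
    have "slope r i l g (i e) = - slope r i l g e"
      by (rule slope_flip[OF M]) (use edge[OF e] g e in \<open>auto simp: PL_def\<close>)
    then show "slope r i l g (i e) + slope r i l g e = 0" by simp
    show "i e \<in> halfedges X r" "i (i e) = e" "i e \<noteq> e" using edge[OF e] by auto
  qed
  finally show ?thesis .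
qed

definition rank_condition :: "'m::ab_group_add set \<Rightarrow> 'x set \<Rightarrow> ('x \<Rightarrow> 'x) \<Rightarrow> ('x \<Rightarrow> 'x)
    \<Rightarrow> ('x \<Rightarrow> 'm) \<Rightarrow> ('x \<Rightarrow> int) \<Rightarrow> int \<Rightarrow> bool" where
  "rank_condition M X r i l D k \<longleftrightarrow> (\<forall>F\<in>divisors X r. (\<forall>v. 0 \<le> F v) \<and> deg X r F = k \<longrightarrow>
       lin_system M X r i l (\<lambda>v. D v - F v) \<noteq> {})"

lemma rank_eq_Greatest: "rank M X r i l D = (GREATEST k. rank_condition M X r i l D k)"
  by (simp add: rank_def rank_condition_def)

lemma rank_condition_minus_one: "rank_condition M X r i l D (- 1)"
  unfolding rank_condition_def deg_def by (smt (verit) sum_nonneg)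

lemma rank_condition_le_deg:
  assumes deg_lap: "\<And>g. g \<in> PL M X r i l \<Longrightarrow> sum (laplacian X r i l g) (verts X r) = 0"
    and V: "v0 \<in> verts X r" "finite (verts X r)"
    and k: "rank_condition M X r i l D k"
  shows "k \<le> max (- 1) (deg X r D)"
proof (cases "k < 0")
  case False
  define F where "F v = (if v = v0 then k else 0)" for v
  have "F \<in> divisors X r" "\<forall>v. 0 \<le> F v" and deg_F: "deg X r F = k"
    using V False by (auto simp: divisors_def deg_def F_def)
  then obtain E where E: "E \<in> lin_system M X r i l (\<lambda>v. D v - F v)"
    using k by (auto simp: rank_condition_def)
  then obtain g where "g \<in> PL M X r i l" "(\<lambda>v. E v - (D v - F v)) = laplacian X r i l g"
    by (auto simp: lin_system_def lin_equiv_def)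
  with deg_lap have "(\<Sum>v\<in>verts X r. E v - (D v - F v)) = 0" by metis
  then have "deg X r E - deg X r D + deg X r F = 0"
    by (simp add: deg_def sum_subtractf sum.distrib algebra_simps)
  moreover have "0 \<le> deg X r E" using E by (simp add: lin_system_def deg_def sum_nonneg)
  ultimately show ?thesis using deg_F by simp
qed simp

lemma Greatest_int_mono:
  fixes P Q :: "int \<Rightarrow> bool"
  assumes "P a" and PQ: "\<And>k. P k \<Longrightarrow> Q k" and bound: "\<And>k. Q k \<Longrightarrow> k \<le> b"
  shows "Greatest P \<le> Greatest Q"
proof -
  have Greatest: "R (Greatest R) \<and> (\<forall>k. R k \<longrightarrow> k \<le> Greatest R)"
    if R: "R a" "\<And>k. R k \<Longrightarrow> k \<le> b" for R
  proof -
    define m where "m = Max {k. R k \<and> a \<le> k}"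
    have fin: "finite {k. R k \<and> a \<le> k}"
      by (rule finite_subset[of _ "{a..b}"]) (use R in auto)
    have "R m" using Max_in[OF fin] R(1) by (auto simp: m_def)
    moreover have le_m: "k \<le> m" if "R k" for k
      using Max_ge[OF fin, of k] Max_ge[OF fin, of a] R(1) that by (cases "a \<le> k") (auto simp: m_def)
    ultimately have "Greatest R = m" by (rule Greatest_equality)
    with \<open>R m\<close> le_m show ?thesis by simp
  qed
  show ?thesis
    using Greatest[of P] Greatest[of Q] assms by blast
qed

section \<open>Edge contraction\<close>

locale edge_contraction =
  fixes M :: "'m::ab_group_add set" and N :: "'n::ab_group_add set"
    and X :: "'x set" and r i :: "'x \<Rightarrow> 'x" and l :: "'x \<Rightarrow> 'm" and f :: "'m \<Rightarrow> 'n"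
  assumes sharp_M: "sharp_monoid M" and sharp_N: "sharp_monoid N"
    and metrised: "metrised_graph M X r i l" and hom: "monoid_hom M N f"
begin

abbreviation "V \<equiv> verts X r"
abbreviation "H \<equiv> halfedges X r"
abbreviation "H_kept \<equiv> {e \<in> H. f (l e) \<noteq> 0}"
abbreviation "R \<equiv> contr_rel X r i l f"
abbreviation "\<phi> \<equiv> contr_map X r i l f"
abbreviation "X' \<equiv> contr_X X r i l f"
abbreviation "r' \<equiv> contr_r X r i l f"
abbreviation "i' \<equiv> contr_i X r i l f"
abbreviation "l' \<equiv> contr_l l f"
abbreviation "V' \<equiv> verts X' r'"
abbreviation "H' \<equiv> halfedges X' r'"
abbreviation "push \<equiv> push_div X r i l f"

lemma finite_X: "finite X"
  using metrised by (simp add: metrised_graph_def is_graph_def)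

lemma graph_facts:
  assumes "x \<in> X"
  shows "r x \<in> X" "i x \<in> X" "r (r x) = r x" "i (i x) = x" "i x = x \<longleftrightarrow> r x = x"
    "l x \<in> M" "l (i x) = l x" "l x = 0 \<longleftrightarrow> x \<in> V"
  using metrised assms by (auto simp: metrised_graph_def is_graph_def)

lemma vert_iff: "x \<in> V \<longleftrightarrow> x \<in> X \<and> r x = x"
  by (simp add: verts_def)

lemma halfedge_iff: "x \<in> H \<longleftrightarrow> x \<in> X \<and> r x \<noteq> x"
  by (auto simp: halfedges_def verts_def)

lemma halfedge_facts:
  assumes "e \<in> H"
  shows "r e \<in> V" "i e \<in> H" "i e \<noteq> e" "l e \<in> M" "l e \<noteq> 0"
  using assms graph_facts[of e] graph_facts[of "i e"]
  by (auto simp: halfedge_iff vert_iff)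

lemma kept_i: "e \<in> H_kept \<Longrightarrow> i e \<in> H_kept"
  using halfedge_facts graph_facts by (auto simp: halfedge_iff)

lemma finite_V: "finite V"
  using finite_X by (simp add: verts_def)

lemma equiv_R: "equiv X R"
proof -
  let ?G = "contr_gen X r i l f"
  have "sym ((?G \<union> ?G\<inverse>)\<^sup>*)" by (rule sym_rtrancl[OF sym_Un_converse])
  then show ?thesis
    unfolding equiv_def refl_on_def sym_def trans_def contr_rel_def
    by (blast intro: rtrancl_trans)
qed

lemma R_subset: "R \<subseteq> X \<times> X"
  by (auto simp: contr_rel_def)

lemma contr_gen_R: "(a, b) \<in> contr_gen X r i l f \<Longrightarrow> (a, b) \<in> R"
  by (auto simp: contr_rel_def contr_gen_def halfedge_iff graph_facts)

lemma R_contracted: "e \<in> H \<Longrightarrow> f (l e) = 0 \<Longrightarrow> (e, r e) \<in> R \<and> (e, r (i e)) \<in> R"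
  by (auto intro!: contr_gen_R simp: contr_gen_def)

lemma R_r: "x \<in> X \<Longrightarrow> x \<notin> H_kept \<Longrightarrow> (x, r x) \<in> R"
  using R_contracted[of x] by (cases "r x = x") (auto simp: contr_rel_def halfedge_iff)

lemma mem_\<phi>: "x \<in> X \<Longrightarrow> x \<in> \<phi> x"
  by (simp add: contr_map_def contr_rel_def)

lemma \<phi>_eq_iff: "x \<in> X \<Longrightarrow> y \<in> X \<Longrightarrow> \<phi> x = \<phi> y \<longleftrightarrow> (x, y) \<in> R"
  using eq_equiv_class_iff[OF equiv_R] by (simp add: contr_map_def)

lemma \<phi>_in_X': "x \<in> X \<Longrightarrow> \<phi> x \<in> X'"
  by (simp add: contr_X_def contr_map_def quotientI)

text \<open>A surviving half-edge is related to nothing else: every generating pair of the contraction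
  relation joins a contracted half-edge to a vertex or to its (also contracted) partner.\<close>

lemma \<phi>_kept: assumes e: "e \<in> H_kept" shows "\<phi> e = {e}"
proof -
  let ?G = "contr_gen X r i l f"
  have "y = e" if "(e, y) \<in> (?G \<union> ?G\<inverse>)\<^sup>*" for y
    using that
  proof (induction rule: rtrancl_induct)
    case (step y z)
    then consider "(e, z) \<in> ?G" | "(z, e) \<in> ?G" by auto
    then show ?case
    proof cases
      case 1 then show ?thesis using e by (auto simp: contr_gen_def)
    next
      case 2
      then have z: "z \<in> H" "f (l z) = 0" "e = r z \<or> e = i z \<or> e = r (i z)"
        by (auto simp: contr_gen_def)
      then show ?thesis
        using e halfedge_facts[OF z(1)] graph_facts[of z] graph_facts[of "i z"]
        by (auto simp: halfedge_iff vert_iff)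
    qed
  qed simp
  then show ?thesis using e by (auto simp: contr_map_def contr_rel_def halfedge_iff)
qed

lemma vertex_class_unkept:
  assumes v: "v \<in> V" and y: "y \<in> \<phi> v"
  shows "y \<notin> H_kept"
proof
  assume y_kept: "y \<in> H_kept"
  have "(v, y) \<in> R" using y by (simp add: contr_map_def)
  then have "\<phi> y = \<phi> v" using \<phi>_eq_iff R_subset by blast
  then have "v = y" using \<phi>_kept[OF y_kept] mem_\<phi> v by (auto simp: vert_iff)
  then show False using v y_kept by (simp add: vert_iff halfedge_iff)
qed

lemma r'_\<phi>_vert: assumes v: "v \<in> V" shows "r' (\<phi> v) = \<phi> v"
proof -
  have "(y, r y) \<in> R" if "y \<in> \<phi> v" for y
    using that R_r vertex_class_unkept[OF v] R_subset by (auto simp: contr_map_def)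
  then have "R `` (r ` \<phi> v) \<subseteq> \<phi> v"
    using equiv_R unfolding contr_map_def equiv_def trans_def by blast
  moreover have "v \<in> r ` \<phi> v" using mem_\<phi> v by (force simp: vert_iff)
  then have "\<phi> v \<subseteq> R `` (r ` \<phi> v)" by (auto simp: contr_map_def)
  ultimately show ?thesis by (auto simp: contr_r_def)
qed

lemma X'_cases:
  assumes "C \<in> X'"
  obtains (vert) v where "v \<in> V" "C = \<phi> v" | (kept) e where "e \<in> H_kept" "C = {e}"
proof -
  obtain x where x: "x \<in> X" "C = \<phi> x"
    using assms by (auto simp: contr_X_def contr_map_def elim: quotientE)
  show ?thesis
  proof (cases "x \<in> H_kept")
    case True then show ?thesis using kept x \<phi>_kept by auto
  next
    case False
    then have "\<phi> x = \<phi> (r x)" using R_r x \<phi>_eq_iff R_subset by auto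
    then show ?thesis using vert[of "r x"] x graph_facts[OF x(1)] by (simp add: vert_iff)
  qed
qed

lemma r'_kept: "r' {e} = \<phi> (r e)"
  by (simp add: contr_r_def contr_map_def)

lemma i'_kept: "e \<in> H_kept \<Longrightarrow> i' {e} = {i e}"
  using \<phi>_kept[OF kept_i] by (simp add: contr_i_def contr_map_def)

lemma l'_kept: "l' {e} = f (l e)"
  by (simp add: contr_l_def)

lemma V'_eq: "V' = \<phi> ` V"
proof
  show "\<phi> ` V \<subseteq> V'" using r'_\<phi>_vert \<phi>_in_X' by (auto simp: verts_def vert_iff)
  show "V' \<subseteq> \<phi> ` V"
  proof
    fix C assume "C \<in> V'"
    then have C: "C \<in> X'" "r' C = C" by (auto simp: verts_def)
    from C(1) show "C \<in> \<phi> ` V"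
    proof (cases rule: X'_cases)
      case (kept e)
      then have "r e \<in> C" using C(2) r'_kept mem_\<phi> graph_facts by (metis halfedge_iff mem_Collect_eq)
      then show ?thesis using kept by (auto simp: halfedge_iff)
    qed auto
  qed
qed

lemma H'_eq: "H' = (\<lambda>e. {e}) ` H_kept"
proof
  show "H' \<subseteq> (\<lambda>e. {e}) ` H_kept"
  proof
    fix C assume "C \<in> H'"
    then have C: "C \<in> X'" "C \<notin> V'" by (auto simp: halfedges_def)
    from C(1) show "C \<in> (\<lambda>e. {e}) ` H_kept"
      by (cases rule: X'_cases) (use C V'_eq in auto)
  qed
  show "(\<lambda>e. {e}) ` H_kept \<subseteq> H'"
  proof
    fix C assume "C \<in> (\<lambda>e. {e}) ` H_kept"
    then obtain e where e: "e \<in> H_kept" "C = {e}" by auto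
    have "C \<in> X'" using \<phi>_in_X'[of e] \<phi>_kept[OF e(1)] e by (auto simp: halfedge_iff)
    moreover have "C \<notin> V'"
      using V'_eq e mem_\<phi> by (force simp: vert_iff halfedge_iff)
    ultimately show "C \<in> H'" by (simp add: halfedges_def)
  qed
qed

lemma finite_V': "finite V'"
  using V'_eq finite_V by simp

lemma contracted_laplacian_sum_eq_0:
  assumes "g' \<in> PL N X' r' i' l'"
  shows "sum (laplacian X' r' i' l' g') V' = 0"
proof (rule laplacian_sum_eq_0[OF sharp_N assms])
  show "finite X'" unfolding contr_X_def by (rule finite_quotient[OF finite_X R_subset])
  fix C assume "C \<in> H'"
  then obtain e where e: "e \<in> H_kept" "C = {e}" using H'_eq by auto
  have "f (l e) \<in> N" using hom halfedge_facts e by (simp add: monoid_hom_def)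
  then show "r' C \<in> V' \<and> i' C \<in> H' \<and> i' C \<noteq> C \<and> i' (i' C) = C \<and> l' (i' C) = l' C
      \<and> l' C \<in> N \<and> l' C \<noteq> 0"
    using e kept_i[OF e(1)] halfedge_facts[of e] graph_facts[of e] i'_kept r'_kept l'_kept
      V'_eq H'_eq by (auto simp: halfedge_iff)
qed

abbreviation "f_gp \<equiv> gp_hom M f"

lemma submonoid_M: "submonoid M"
  using sharp_M by (rule sharp_monoid_imp_submonoid)

lemma f_gp_slope:
  assumes g: "g \<in> PL M X r i l" and e: "e \<in> H"
  obtains k where "g (r e) - g (r (i e)) = zsmul k (l e)"
    "f_gp (g (r e)) - f_gp (g (r (i e))) = zsmul k (f (l e))"
proof -
  obtain k where k: "g (r e) - g (r (i e)) = zsmul k (l e)"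
    using g e by (auto simp: PL_def zspan_def)
  have "g (r e) \<in> gp M" "g (r (i e)) \<in> gp M"
    using g halfedge_facts[OF e] halfedge_facts[of "i e"] by (auto simp: PL_def)
  then have "f_gp (g (r e)) - f_gp (g (r (i e))) = f_gp (zsmul k (l e))"
    using k gp_hom_diff[OF submonoid_M hom] by metis
  also have "\<dots> = zsmul k (f (l e))"
    using gp_hom_zsmul[OF submonoid_M hom] halfedge_facts[OF e] by simp
  finally show ?thesis using that k by blast
qed

lemma f_gp_constant_on_R:
  assumes g: "g \<in> PL M X r i l" and xy: "(x, y) \<in> R"
  shows "f_gp (g (r x)) = f_gp (g (r y))"
proof -
  have step: "f_gp (g (r a)) = f_gp (g (r b))" if ab: "(a, b) \<in> contr_gen X r i l f" for a b
  proof -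
    from ab have a: "a \<in> H" "f (l a) = 0" "b = r a \<or> b = i a \<or> b = r (i a)"
      by (auto simp: contr_gen_def)
    obtain k where "f_gp (g (r a)) - f_gp (g (r (i a))) = zsmul k (f (l a))"
      using f_gp_slope[OF g a(1)] by blast
    then have "f_gp (g (r a)) = f_gp (g (r (i a)))" using a(2) by simp
    then show ?thesis
      using a(3) halfedge_facts[OF a(1)] graph_facts[of a] graph_facts[of "i a"]
      by (auto simp: halfedge_iff vert_iff)
  qed
  from xy have "(x, y) \<in> (contr_gen X r i l f \<union> (contr_gen X r i l f)\<inverse>)\<^sup>*"
    by (simp add: contr_rel_def)
  then show ?thesis
    by (induction rule: rtrancl_induct) (auto dest: step)
qed

text \<open>By f_gp_constant_on_R the value on V' does not depend on the chosen vertex of the fibre;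
  on the singletons of surviving half-edges the choice is junk and never used.\<close>

definition push_PL :: "('x \<Rightarrow> 'm) \<Rightarrow> 'x set \<Rightarrow> 'n" where
  "push_PL g C = f_gp (g (SOME v. v \<in> V \<and> \<phi> v = C))"

lemma push_PL_\<phi>:
  assumes g: "g \<in> PL M X r i l" and w: "w \<in> V"
  shows "push_PL g (\<phi> w) = f_gp (g w)"
proof -
  define v where "v = (SOME v. v \<in> V \<and> \<phi> v = \<phi> w)"
  have v: "v \<in> V \<and> \<phi> v = \<phi> w"
    unfolding v_def by (rule someI[of _ w]) (use w in auto)
  then have "(v, w) \<in> R" using \<phi>_eq_iff w by (auto simp: vert_iff)
  then have "f_gp (g (r v)) = f_gp (g (r w))" by (rule f_gp_constant_on_R[OF g])
  moreover have "push_PL g (\<phi> w) = f_gp (g v)" by (simp add: push_PL_def v_def)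
  ultimately show ?thesis using v w by (simp add: vert_iff)
qed

lemma push_PL_slope:
  assumes g: "g \<in> PL M X r i l" and e: "e \<in> H"
  obtains k where "g (r e) - g (r (i e)) = zsmul k (l e)"
    "push_PL g (\<phi> (r e)) - push_PL g (\<phi> (r (i e))) = zsmul k (f (l e))"
  using f_gp_slope[OF g e] push_PL_\<phi>[OF g] halfedge_facts e by metis

lemma push_PL_mem:
  assumes g: "g \<in> PL M X r i l"
  shows "push_PL g \<in> PL N X' r' i' l'"
  unfolding PL_def
proof (intro CollectI conjI ballI)
  fix C assume "C \<in> V'"
  then obtain w where "w \<in> V" "C = \<phi> w" using V'_eq by auto
  then show "push_PL g C \<in> gp N"
    using g push_PL_\<phi>[OF g] gp_hom_mem_gp[OF submonoid_M hom] by (simp add: PL_def)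
next
  fix C assume "C \<in> H'"
  then obtain e where e: "e \<in> H_kept" "C = {e}" using H'_eq by auto
  obtain k where "push_PL g (\<phi> (r e)) - push_PL g (\<phi> (r (i e))) = zsmul k (f (l e))"
    using push_PL_slope[OF g] e by blast
  then show "push_PL g (r' C) - push_PL g (r' (i' C)) \<in> zspan (l' C)"
    using e r'_kept i'_kept l'_kept by (auto simp: zspan_def)
qed

lemma slope_push_PL:
  assumes g: "g \<in> PL M X r i l" and e: "e \<in> H_kept"
  shows "slope r' i' l' (push_PL g) {e} = slope r i l g e"
proof -
  obtain k where k: "g (r e) - g (r (i e)) = zsmul k (l e)"
    "push_PL g (\<phi> (r e)) - push_PL g (\<phi> (r (i e))) = zsmul k (f (l e))"
    using push_PL_slope[OF g] e by blast
  have "f (l e) \<in> N" using hom halfedge_facts e by (simp add: monoid_hom_def)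
  then show ?thesis
    using k e halfedge_facts[of e] zdiv_zsmul[OF sharp_M] zdiv_zsmul[OF sharp_N]
    by (simp add: slope_def r'_kept i'_kept l'_kept)
qed

text \<open>The two half-edges of a contracted edge lie over the same vertex of \<Gamma>' and their slopes cancel.\<close>

lemma slope_sum_contracted_eq_0:
  assumes g: "g \<in> PL M X r i l"
  shows "(\<Sum>e\<in>{e \<in> H. f (l e) = 0 \<and> \<phi> (r e) = C}. slope r i l g e) = 0"
proof (rule sum_involution_eq_0[where h = i])
  fix e assume "e \<in> {e \<in> H. f (l e) = 0 \<and> \<phi> (r e) = C}"
  then have e: "e \<in> H" "f (l e) = 0" "\<phi> (r e) = C" by auto
  have "(r e, r (i e)) \<in> R"
    using R_contracted[OF e(1,2)] equiv_R unfolding equiv_def sym_def trans_def by blast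
  then have "\<phi> (r (i e)) = C" using \<phi>_eq_iff R_subset e(3) by blast
  then show "i e \<in> {e \<in> H. f (l e) = 0 \<and> \<phi> (r e) = C}"
    using e halfedge_facts[OF e(1)] graph_facts[of e] by (auto simp: halfedge_iff)
  show "i (i e) = e" "i e \<noteq> e" using e halfedge_facts graph_facts by (auto simp: halfedge_iff)
  have "slope r i l g (i e) = - slope r i l g e"
    by (rule slope_flip[OF sharp_M]) (use g e halfedge_facts[of e] graph_facts[of e] in
        \<open>auto simp: PL_def halfedge_iff\<close>)
  then show "slope r i l g (i e) + slope r i l g e = 0" by simp
qed

lemma push_laplacian:
  assumes g: "g \<in> PL M X r i l" and C: "C \<in> V'"
  shows "push (laplacian X r i l g) C = laplacian X' r' i' l' (push_PL g) C"
proof -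
  let ?s = "slope r i l g"
  have H'_fibre: "{C' \<in> H'. r' C' = C} = (\<lambda>e. {e}) ` {e \<in> H_kept. \<phi> (r e) = C}"
    unfolding H'_eq using r'_kept by auto
  have "push (laplacian X r i l g) C
      = (\<Sum>v\<in>{v \<in> V. \<phi> v = C}. \<Sum>e\<in>{e \<in> H. r e = v}. ?s e)"
    using C by (simp add: push_div_def laplacian_eq_sum_slope)
  also have "\<dots> = (\<Sum>v\<in>{v \<in> V. \<phi> v = C}. \<Sum>e\<in>{e \<in> {e \<in> H. \<phi> (r e) = C}. r e = v}. ?s e)"
    by (intro sum.cong) auto
  also have "\<dots> = (\<Sum>e\<in>{e \<in> H. \<phi> (r e) = C}. ?s e)"
    using finite_X finite_V halfedge_facts by (intro sum.group) (auto simp: halfedges_def)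
  also have "\<dots> = (\<Sum>e\<in>{e \<in> H_kept. \<phi> (r e) = C}. ?s e)
      + (\<Sum>e\<in>{e \<in> H. f (l e) = 0 \<and> \<phi> (r e) = C}. ?s e)"
    using finite_X by (subst sum.union_disjoint[symmetric]) (auto intro: sum.cong simp: halfedges_def)
  also have "\<dots> = (\<Sum>e\<in>{e \<in> H_kept. \<phi> (r e) = C}. slope r' i' l' (push_PL g) {e})"
    using slope_sum_contracted_eq_0[OF g] slope_push_PL[OF g] by simp
  also have "\<dots> = (\<Sum>C'\<in>{C' \<in> H'. r' C' = C}. slope r' i' l' (push_PL g) C')"
    unfolding H'_fibre by (simp add: sum.reindex)
  also have "\<dots> = laplacian X' r' i' l' (push_PL g) C"
    using C by (simp add: laplacian_eq_sum_slope)
  finally show ?thesis .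
qed

lemma push_div_mem: "push G \<in> divisors X' r'"
  by (simp add: divisors_def push_div_def)

lemma deg_push_div: "deg X' r' (push G) = deg X r G"
proof -
  have "deg X' r' (push G) = (\<Sum>C\<in>V'. \<Sum>v\<in>{v \<in> V. \<phi> v = C}. G v)"
    by (simp add: deg_def push_div_def)
  also have "\<dots> = deg X r G"
    unfolding deg_def using finite_V finite_V' V'_eq by (intro sum.group) auto
  finally show ?thesis .
qed

text \<open>Lift F' by placing F'(C) on one chosen vertex of each fibre of \<phi>.\<close>

lemma effective_divisor_lift:
  assumes F': "F' \<in> divisors X' r'" "\<forall>C. 0 \<le> F' C"
  obtains F where "F \<in> divisors X r" "\<forall>v. 0 \<le> F v" "push F = F'"
proof
  define rep where "rep C = (SOME v. v \<in> V \<and> \<phi> v = C)" for C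
  show "(\<lambda>v. if v \<in> V \<and> rep (\<phi> v) = v then F' (\<phi> v) else 0) \<in> divisors X r"
    by (simp add: divisors_def)
  show "\<forall>v. 0 \<le> (if v \<in> V \<and> rep (\<phi> v) = v then F' (\<phi> v) else 0)" using F' by simp
  show "push (\<lambda>v. if v \<in> V \<and> rep (\<phi> v) = v then F' (\<phi> v) else 0) = F'"
  proof
    fix C show "push (\<lambda>v. if v \<in> V \<and> rep (\<phi> v) = v then F' (\<phi> v) else 0) C = F' C"
    proof (cases "C \<in> V'")
      case True
      then obtain w where w: "w \<in> V" "C = \<phi> w" using V'_eq by auto
      have rep: "rep C \<in> V \<and> \<phi> (rep C) = C"
        unfolding rep_def by (rule someI[of _ w]) (use w in auto)
      have "push (\<lambda>v. if v \<in> V \<and> rep (\<phi> v) = v then F' (\<phi> v) else 0) C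
          = (\<Sum>v\<in>{v \<in> V. \<phi> v = C}. if v = rep C then F' C else 0)"
        using True by (auto simp: push_div_def intro: sum.cong)
      also have "\<dots> = F' C" using finite_V rep by simp
      finally show ?thesis .
    next
      case False then show ?thesis using F'(1) by (simp add: push_div_def divisors_def)
    qed
  qed
qed

lemma rank_condition_push_div:
  assumes D: "rank_condition M X r i l D k"
  shows "rank_condition N X' r' i' l' (push D) k"
  unfolding rank_condition_def
proof (intro ballI impI)
  fix F' assume F': "F' \<in> divisors X' r'" "(\<forall>C. 0 \<le> F' C) \<and> deg X' r' F' = k"
  then obtain F where F: "F \<in> divisors X r" "\<forall>v. 0 \<le> F v" "push F = F'"
    using effective_divisor_lift by blast
  then have "deg X r F = k" using F' deg_push_div by metis
  then obtain E where E: "E \<in> lin_system M X r i l (\<lambda>v. D v - F v)"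
    using D F by (auto simp: rank_condition_def)
  then obtain g where g: "g \<in> PL M X r i l"
    and lap: "(\<lambda>v. E v - (D v - F v)) = laplacian X r i l g"
    by (auto simp: lin_system_def lin_equiv_def)
  have "(\<lambda>C. push E C - (push D C - F' C)) = laplacian X' r' i' l' (push_PL g)"
  proof
    fix C show "push E C - (push D C - F' C) = laplacian X' r' i' l' (push_PL g) C"
    proof (cases "C \<in> V'")
      case True
      then have "push E C - (push D C - F' C) = push (\<lambda>v. E v - (D v - F v)) C"
        by (simp add: F(3)[symmetric] push_div_def sum_subtractf)
      then show ?thesis using push_laplacian[OF g True] lap by simp
    qed (use F'(1) in \<open>simp add: push_div_def laplacian_def divisors_def\<close>)
  qed
  then have "push E \<in> lin_system N X' r' i' l' (\<lambda>C. push D C - F' C)"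
    using E push_PL_mem[OF g] push_div_mem
    by (auto simp: lin_system_def lin_equiv_def push_div_def sum_nonneg)
  then show "lin_system N X' r' i' l' (\<lambda>C. push D C - F' C) \<noteq> {}" by blast
qed

lemma rank_push_div_ge: "rank M X r i l D \<le> rank N X' r' i' l' (push D)"
proof -
  obtain v0 where "v0 \<in> V" using metrised by (auto simp: metrised_graph_def is_graph_def)
  then have v0: "\<phi> v0 \<in> V'" using V'_eq by simp
  show ?thesis
    unfolding rank_eq_Greatest
  proof (rule Greatest_int_mono)
    show "rank_condition M X r i l D (- 1)" by (rule rank_condition_minus_one)
    show "rank_condition N X' r' i' l' (push D) k" if "rank_condition M X r i l D k" for k
      using that by (rule rank_condition_push_div)
    show "k \<le> max (- 1) (deg X' r' (push D))" if "rank_condition N X' r' i' l' (push D) k" for k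
      by (rule rank_condition_le_deg[OF contracted_laplacian_sum_eq_0 v0 finite_V' that])
  qed
qed

end

theorem lemma4p4:
  fixes M :: "'m::ab_group_add set" and N :: "'n::ab_group_add set"
    and X :: "'x set" and r i :: "'x \<Rightarrow> 'x" and l :: "'x \<Rightarrow> 'm"
    and f :: "'m \<Rightarrow> 'n" and D :: "'x \<Rightarrow> int"
  assumes "sharp_monoid M" and "sharp_monoid N"
    and "metrised_graph M X r i l"
    and "monoid_hom M N f"
    and "D \<in> divisors X r"
  shows "rank N (contr_X X r i l f) (contr_r X r i l f) (contr_i X r i l f) (contr_l l f)
           (push_div X r i l f D) \<ge> rank M X r i l D"
proof -
  interpret edge_contraction M N X r i l f
    using assms(1-4) by unfold_locales
  show ?thesis by (rule rank_push_div_ge)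
qed

end
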